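(* Let $k=b/\ln b$ and $T'_w=4(b+1)\ln b+2b\ln\ln b$. For all sufficiently large $b$, for the maximal one-step coupling $(X_t,Y_t)$ of the Glauber dynamics on proper $k$-colorings of the star graph $G^*$ started from any pair $(x_0,y_0)$, with probability at least $1/(2\ln^2 b)$ every leaf $\ell_i$ with $X_{T'_w}(\ell_i)\ne Y_{T'_w}(\ell_i)$ satisfies $X_{T'_w}(\ell_i)=Y_{T'_w}(r)$ and $Y_{T'_w}(\ell_i)=X_{T'_w}(r)$.
   Context: $G^*$: star graph with root $r$ and leaves $\ell_1,\dots,\ell_b$. Heat-bath Glauber dynamics for proper $k$-colorings: choose a uniform vertex $v$ and recolor it uniformly from its available colors $A_\sigma(v)=\{c: c\ne\sigma(u)\ \forall u\sim v\}$. The maximal one-step coupling: both chains choose the same uniformly random vertex $v$; for each $c\in A_{X_t}(v)\cap A_{Y_t}(v)$, with probability $1/\max\{|A_{X_t}(v)|,|A_{Y_t}(v)|\}$ both set $v$ to $c$; otherwise colors are chosen from the correct marginals, coupled arbitrarily. *)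

theory Defs
  imports "HOL-Probability.Probability"
begin

text \<open>Star graph with root 0 and leaves 1..b (leaf i is vertex i). Vertex set is {..b}.\<close>
definition star_adj :: "nat \<Rightarrow> nat \<Rightarrow> nat \<Rightarrow> bool" where
  "star_adj b u v \<longleftrightarrow> (u = 0 \<and> 1 \<le> v \<and> v \<le> b) \<or> (v = 0 \<and> 1 \<le> u \<and> u \<le> b)"

definition avail :: "nat \<Rightarrow> nat \<Rightarrow> (nat \<Rightarrow> nat) \<Rightarrow> nat \<Rightarrow> nat set" where
  "avail b k \<sigma> v = {c. c < k \<and> (\<forall>u. star_adj b v u \<longrightarrow> c \<noteq> \<sigma> u)}"

definition proper_col :: "nat \<Rightarrow> nat \<Rightarrow> (nat \<Rightarrow> nat) \<Rightarrow> bool" where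
  "proper_col b k \<sigma> \<longleftrightarrow> (\<forall>v\<le>b. \<sigma> v < k) \<and> (\<forall>u v. star_adj b u v \<longrightarrow> \<sigma> u \<noteq> \<sigma> v)"

text \<open>A (possibly time- and state-dependent) choice of one-step coupling kernels
  K t x y v (the joint law of the new colours of v in the two chains) that is a
  maximal one-step coupling: correct heat-bath marginals, and for every common
  available colour c, both chains take c with probability 1/max(|A_X(v)|,|A_Y(v)|).\<close>
definition max_coupling ::
  "nat \<Rightarrow> nat \<Rightarrow> (nat \<Rightarrow> (nat \<Rightarrow> nat) \<Rightarrow> (nat \<Rightarrow> nat) \<Rightarrow> nat \<Rightarrow> (nat \<times> nat) pmf) \<Rightarrow> bool" where
  "max_coupling b k K \<longleftrightarrow>
    (\<forall>t x y v. proper_col b k x \<and> proper_col b k y \<and> v \<le> b \<longrightarrow>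
       map_pmf fst (K t x y v) = pmf_of_set (avail b k x v) \<and>
       map_pmf snd (K t x y v) = pmf_of_set (avail b k y v) \<and>
       (\<forall>c \<in> avail b k x v \<inter> avail b k y v.
          pmf (K t x y v) (c, c) =
            1 / real (max (card (avail b k x v)) (card (avail b k y v)))))"

definition coupled_step ::
  "nat \<Rightarrow> (nat \<Rightarrow> (nat \<Rightarrow> nat) \<Rightarrow> (nat \<Rightarrow> nat) \<Rightarrow> nat \<Rightarrow> (nat \<times> nat) pmf) \<Rightarrow> nat \<Rightarrow>
     (nat \<Rightarrow> nat) \<times> (nat \<Rightarrow> nat) \<Rightarrow> ((nat \<Rightarrow> nat) \<times> (nat \<Rightarrow> nat)) pmf" where
  "coupled_step b K t s =
     bind_pmf (pmf_of_set {..b}) (\<lambda>v.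
       map_pmf (\<lambda>(c, d). ((fst s)(v := c), (snd s)(v := d))) (K t (fst s) (snd s) v))"

primrec coupled_dist ::
  "nat \<Rightarrow> (nat \<Rightarrow> (nat \<Rightarrow> nat) \<Rightarrow> (nat \<Rightarrow> nat) \<Rightarrow> nat \<Rightarrow> (nat \<times> nat) pmf) \<Rightarrow>
     (nat \<Rightarrow> nat) \<Rightarrow> (nat \<Rightarrow> nat) \<Rightarrow> nat \<Rightarrow> ((nat \<Rightarrow> nat) \<times> (nat \<Rightarrow> nat)) pmf" where
  "coupled_dist b K x0 y0 0 = return_pmf (x0, y0)"
| "coupled_dist b K x0 y0 (Suc t) = bind_pmf (coupled_dist b K x0 y0 t) (coupled_step b K t)"

definition num_colors :: "nat \<Rightarrow> nat" where
  "num_colors b = nat \<lfloor>real b / ln (real b)\<rfloor>"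

definition T_w :: "nat \<Rightarrow> nat" where
  "T_w b = nat \<lceil>4 * (real b + 1) * ln (real b) + 2 * real b * ln (ln (real b))\<rceil>"

end

theory Submission
  imports Defs
begin

text \<open>Under a maximal coupling both leaf marginals are uniform on k - 1 colours, and every
  common colour is taken jointly with its full marginal mass; so when a leaf is recoloured
  the two chains either agree there or the leaf receives the other chain's root colour in each
  chain, i.e. its disagreement becomes a swap. Root updates leave the set of disagreeing
  leaves unchanged. Hence during the first n \<approx> 4 b ln b steps the expected number of
  disagreeing leaves decays geometrically (rate b/(b+1)) to about b/(k-1) \<approx> ln b; during
  the remaining m \<approx> 2 b ln ln b steps the root is never chosen with probability
  (b/(b+1))^m \<approx> 1/(ln b)^2, and a union bound shows that then, with comparable probability,
  every disagreeing leaf is recoloured at least once and is therefore swapped.\<close>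

lemma integral_bind_pmf_bounded:
  fixes f :: "'b \<Rightarrow> real"
  assumes "\<And>y. \<bar>f y\<bar> \<le> B"
  shows "(\<integral>y. f y \<partial>measure_pmf (bind_pmf p q)) = (\<integral>x. (\<integral>y. f y \<partial>measure_pmf (q x)) \<partial>measure_pmf p)"
  unfolding measure_pmf_bind
  by (rule integral_bind[where K="count_space UNIV" and B=B and B'=1])
     (auto simp: assms measure_pmf.finite_measure measure_subprob
           intro!: AE_pmfI measure_pmf.emeasure_le_1)

lemma measure_pmf_prob_bind:
  "measure_pmf.prob (bind_pmf p q) A = (\<integral>x. measure_pmf.prob (q x) A \<partial>measure_pmf p)"
  unfolding measure_pmf_bind
  by (rule measure_pmf.measure_bind[where N="count_space UNIV"]) (auto simp: measure_subprob)

lemma integral_mono_pmf_bounded: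
  fixes f g :: "'b \<Rightarrow> real"
  assumes "\<And>x. x \<in> set_pmf p \<Longrightarrow> f x \<le> g x" "\<And>x. \<bar>f x\<bar> \<le> B" "\<And>x. \<bar>g x\<bar> \<le> C"
  shows "(\<integral>x. f x \<partial>measure_pmf p) \<le> (\<integral>x. g x \<partial>measure_pmf p)"
  using assms
  by (intro integral_mono_AE measure_pmf.integrable_const_bound AE_pmfI) auto

lemma integral_ge_const_pmf:
  fixes f :: "'b \<Rightarrow> real"
  assumes "\<And>x. x \<in> set_pmf p \<Longrightarrow> c \<le> f x" "\<And>x. \<bar>f x\<bar> \<le> B"
  shows "c \<le> (\<integral>x. f x \<partial>measure_pmf p)"
  using assms
  by (intro measure_pmf.integral_ge_const measure_pmf.integrable_const_bound[where B=B] AE_pmfI) auto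

lemma real_card_Diff_singleton:
  assumes "finite A"
  shows "real (card (A - {v})) = real (card A) - (if v \<in> A then 1 else 0)"
proof (cases "v \<in> A")
  case True
  have "real (Suc (card (A - {v}))) = real (card A)"
    by (simp only: card_Suc_Diff1[OF assms True])
  then show ?thesis using True by (simp only: of_nat_Suc if_True)
qed simp

lemma sum_card_Diff_singleton:
  assumes "finite I" "A \<subseteq> I"
  shows "(\<Sum>v\<in>I. real (card (A - {v}))) = (real (card I) - 1) * real (card A)"
proof -
  have "finite A" using assms(2,1) by (rule finite_subset)
  then have "(\<Sum>v\<in>I. real (card (A - {v}))) = real (card I) * real (card A) - real (card (I \<inter> A))"
    using assms(1) by (simp add: real_card_Diff_singleton sum_subtractf sum.If_cases)
  also have "I \<inter> A = A" using assms(2) by blast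
  finally show ?thesis by (simp add: algebra_simps)
qed

lemma affine_recurrence_bound:
  fixes a :: "nat \<Rightarrow> real"
  assumes step: "\<And>n. a (Suc n) \<le> q * a n + (1 - q) * F" and q: "0 \<le> q"
  shows "a n \<le> q ^ n * (a 0 - F) + F"
proof (induction n)
  case (Suc n)
  have "a (Suc n) \<le> q * (q ^ n * (a 0 - F) + F) + (1 - q) * F"
    using step[of n] mult_left_mono[OF Suc q] by linarith
  also have "\<dots> = q ^ Suc n * (a 0 - F) + F"
    by (simp add: algebra_simps)
  finally show ?case .
qed simp

lemma star_adj_leaf_iff: "1 \<le> i \<Longrightarrow> i \<le> b \<Longrightarrow> star_adj b i u \<longleftrightarrow> u = 0"
  unfolding star_adj_def by auto

lemma avail_leaf: "1 \<le> i \<Longrightarrow> i \<le> b \<Longrightarrow> avail b k x i = {..<k} - {x 0}"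
  unfolding avail_def using star_adj_leaf_iff by auto

lemma finite_avail [simp]: "finite (avail b k x v)"
  unfolding avail_def by (rule finite_subset[of _ "{..<k}"]) auto

lemma card_avail_leaf:
  assumes "proper_col b k x" "1 \<le> i" "i \<le> b"
  shows "card (avail b k x i) = k - 1"
  using assms unfolding avail_leaf[OF assms(2,3)] proper_col_def by simp

lemma avail_nonempty:
  assumes "proper_col b k x" "v \<le> b" "2 \<le> k"
  shows "avail b k x v \<noteq> {}"
proof (cases "v = 0")
  case True
  then have "x 0 \<in> avail b k x v"
    using assms(1) unfolding avail_def proper_col_def by auto
  then show ?thesis by blast
next
  case False
  then have "card (avail b k x v) = k - 1" using card_avail_leaf[OF assms(1)] assms(2) by simp
  then show ?thesis using assms(3) by auto
qed

lemma proper_col_upd: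
  assumes "proper_col b k x" "v \<le> b" "c \<in> avail b k x v"
  shows "proper_col b k (x(v := c))"
  using assms unfolding proper_col_def avail_def star_adj_def by (auto split: if_splits)

lemma max_coupling_shift: "max_coupling b k K \<Longrightarrow> max_coupling b k (\<lambda>t. K (t + n))"
  unfolding max_coupling_def by blast

lemma max_coupling_marginals:
  assumes "max_coupling b k K" "proper_col b k x" "proper_col b k y" "v \<le> b"
  shows "map_pmf fst (K t x y v) = pmf_of_set (avail b k x v)"
    and "map_pmf snd (K t x y v) = pmf_of_set (avail b k y v)"
  using assms unfolding max_coupling_def by blast+

lemma max_coupling_diagonal:
  assumes "max_coupling b k K" "proper_col b k x" "proper_col b k y" "v \<le> b"
    and "c \<in> avail b k x v" "c \<in> avail b k y v"
  shows "pmf (K t x y v) (c, c) = 1 / real (max (card (avail b k x v)) (card (avail b k y v)))"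
  using assms unfolding max_coupling_def by blast

lemma max_coupling_set_pmf:
  assumes "max_coupling b k K" "proper_col b k x" "proper_col b k y" "v \<le> b" "2 \<le> k"
    and "(c, d) \<in> set_pmf (K t x y v)"
  shows "c \<in> avail b k x v" "d \<in> avail b k y v"
proof -
  have "c \<in> set_pmf (map_pmf fst (K t x y v))" "d \<in> set_pmf (map_pmf snd (K t x y v))"
    using assms(6) by force+
  then show "c \<in> avail b k x v" "d \<in> avail b k y v"
    unfolding max_coupling_marginals[OF assms(1-4)]
    using avail_nonempty assms(2-5) by simp_all
qed

text \<open>If a common colour c were paired with some d \<noteq> c, the mass of c in the first
  marginal would exceed the diagonal mass 1/(k-1), which is already its full marginal mass.\<close>
lemma max_coupling_leaf_disagreement:
  assumes "max_coupling b k K" "proper_col b k x" "proper_col b k y" "1 \<le> i" "i \<le> b" "2 \<le> k"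
    and "(c, d) \<in> set_pmf (K t x y i)" "c \<noteq> d"
  shows "c = y 0 \<and> d = x 0"
proof -
  let ?K = "K t x y i" and ?AX = "avail b k x i" and ?AY = "avail b k y i"
  note cX = max_coupling_set_pmf(1)[where K=K and t=t, OF assms(1-3,5,6,7)]
  note dY = max_coupling_set_pmf(2)[where K=K and t=t, OF assms(1-3,5,6,7)]
  have diag: "pmf ?K (e, e) = 1 / real (k - 1)" if "e \<in> ?AX" "e \<in> ?AY" for e
    using max_coupling_diagonal[OF assms(1-3,5) that]
    unfolding card_avail_leaf[OF assms(2,4,5)] card_avail_leaf[OF assms(3,4,5)] by simp
  have marg: "pmf (map_pmf fst ?K) e = 1 / real (k - 1)" if "e \<in> ?AX" for e
    using that card_avail_leaf[OF assms(2,4,5)]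
    unfolding max_coupling_marginals(1)[OF assms(1-3,5)] by (subst pmf_of_set) auto
  have marg': "pmf (map_pmf snd ?K) e = 1 / real (k - 1)" if "e \<in> ?AY" for e
    using that card_avail_leaf[OF assms(3,4,5)]
    unfolding max_coupling_marginals(2)[OF assms(1-3,5)] by (subst pmf_of_set) auto
  have pos: "pmf ?K (c, d) > 0" using assms(7) by (simp add: pmf_positive)
  have c_mass: "pmf ?K (c, c) + pmf ?K (c, d) \<le> pmf (map_pmf fst ?K) c"
    using assms(8) measure_pmf.finite_measure_mono[of "{(c, c), (c, d)}" "fst -` {c}" ?K]
    by (simp add: pmf_map measure_measure_pmf_finite)
  have d_mass: "pmf ?K (d, d) + pmf ?K (c, d) \<le> pmf (map_pmf snd ?K) d"
    using assms(8) measure_pmf.finite_measure_mono[of "{(d, d), (c, d)}" "snd -` {d}" ?K]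
    by (simp add: pmf_map measure_measure_pmf_finite)
  have "c \<notin> ?AY"
  proof
    assume "c \<in> ?AY"
    then have "pmf ?K (c, c) = pmf (map_pmf fst ?K) c" using cX diag marg by simp
    with c_mass pos show False by linarith
  qed
  moreover have "d \<notin> ?AX"
  proof
    assume "d \<in> ?AX"
    then have "pmf ?K (d, d) = pmf (map_pmf snd ?K) d" using dY diag marg' by simp
    with d_mass pos show False by linarith
  qed
  ultimately show ?thesis
    using cX dY unfolding avail_leaf[OF assms(4,5)] by auto
qed

lemma max_coupling_leaf_prob_fst:
  assumes "max_coupling b k K" "proper_col b k x" "proper_col b k y" "1 \<le> i" "i \<le> b" "2 \<le> k"
  shows "measure_pmf.prob (K t x y i) {cd. fst cd = e} \<le> 1 / real (k - 1)"
proof -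
  have "measure_pmf.prob (K t x y i) {cd. fst cd = e} = pmf (map_pmf fst (K t x y i)) e"
    by (simp add: pmf_map vimage_def)
  also have "\<dots> \<le> 1 / real (card (avail b k x i))"
    unfolding max_coupling_marginals[OF assms(1-3,5)]
    using avail_nonempty[OF assms(2,5,6)] by (simp add: indicator_def)
  finally show ?thesis unfolding card_avail_leaf[OF assms(2,4,5)] .
qed

definition proper_pair :: "nat \<Rightarrow> nat \<Rightarrow> (nat \<Rightarrow> nat) \<times> (nat \<Rightarrow> nat) \<Rightarrow> bool" where
  "proper_pair b k s \<longleftrightarrow> proper_col b k (fst s) \<and> proper_col b k (snd s)"

definition recolour ::
  "(nat \<Rightarrow> nat) \<times> (nat \<Rightarrow> nat) \<Rightarrow> nat \<Rightarrow> nat \<times> nat \<Rightarrow> (nat \<Rightarrow> nat) \<times> (nat \<Rightarrow> nat)" where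
  "recolour s v cd = ((fst s)(v := fst cd), (snd s)(v := snd cd))"

lemma coupled_step_recolour:
  "coupled_step b K t s =
     bind_pmf (pmf_of_set {..b}) (\<lambda>v. map_pmf (recolour s v) (K t (fst s) (snd s) v))"
  unfolding coupled_step_def recolour_def by (simp add: case_prod_beta')

lemma proper_pair_recolour:
  assumes "max_coupling b k K" "2 \<le> k" "proper_pair b k s" "v \<le> b"
    and "cd \<in> set_pmf (K t (fst s) (snd s) v)"
  shows "proper_pair b k (recolour s v cd)"
proof -
  obtain c d where cd: "cd = (c, d)" by fastforce
  note colours = max_coupling_set_pmf[where K=K and t=t, OF assms(1) _ _ assms(4,2) assms(5)[unfolded cd]]
  show ?thesis
    using assms(3,4) proper_col_upd colours
    unfolding proper_pair_def recolour_def cd by simp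
qed

lemma proper_pair_coupled_dist:
  assumes "max_coupling b k K" "2 \<le> k" "proper_pair b k (x0, y0)"
    and "s \<in> set_pmf (coupled_dist b K x0 y0 n)"
  shows "proper_pair b k s"
  using assms(4)
proof (induction n arbitrary: s)
  case (Suc n)
  then obtain s0 v cd where "s0 \<in> set_pmf (coupled_dist b K x0 y0 n)" "v \<le> b"
    "cd \<in> set_pmf (K n (fst s0) (snd s0) v)" "s = recolour s0 v cd"
    by (auto simp: coupled_step_recolour)
  then show ?case using Suc.IH proper_pair_recolour assms(1,2) by blast
qed (use assms(3) in simp)

lemma coupled_dist_add:
  "coupled_dist b K x0 y0 (n + m) =
     bind_pmf (coupled_dist b K x0 y0 n) (\<lambda>s. coupled_dist b (\<lambda>t. K (t + n)) (fst s) (snd s) m)"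
proof (induction m)
  case (Suc m)
  have "coupled_step b (\<lambda>t. K (t + n)) m = coupled_step b K (n + m)"
    by (rule ext) (simp add: coupled_step_def add.commute)
  then show ?case by (simp add: Suc bind_assoc_pmf)
qed (simp add: bind_return_pmf')

lemma coupled_dist_Suc':
  "coupled_dist b K x y (Suc m) =
     bind_pmf (coupled_step b K 0 (x, y)) (\<lambda>s. coupled_dist b (\<lambda>t. K (t + 1)) (fst s) (snd s) m)"
  using coupled_dist_add[of b K x y 1 m] by (simp add: bind_return_pmf)

lemma integral_coupled_step:
  fixes f :: "(nat \<Rightarrow> nat) \<times> (nat \<Rightarrow> nat) \<Rightarrow> real"
  assumes "\<And>s. \<bar>f s\<bar> \<le> B"
  shows "(\<integral>s'. f s' \<partial>measure_pmf (coupled_step b K t s)) =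
    (\<Sum>v\<le>b. \<integral>cd. f (recolour s v cd) \<partial>measure_pmf (K t (fst s) (snd s) v)) / (real b + 1)"
  unfolding coupled_step_recolour integral_bind_pmf_bounded[where B=B, OF assms]
  by (subst integral_pmf_of_set) auto

definition disagreements :: "nat \<Rightarrow> (nat \<Rightarrow> nat) \<times> (nat \<Rightarrow> nat) \<Rightarrow> nat set" where
  "disagreements b s = {i \<in> {1..b}. fst s i \<noteq> snd s i}"

definition unswapped :: "nat \<Rightarrow> (nat \<Rightarrow> nat) \<times> (nat \<Rightarrow> nat) \<Rightarrow> nat set" where
  "unswapped b s = {i \<in> disagreements b s. \<not> (fst s i = snd s 0 \<and> snd s i = fst s 0)}"

lemma disagreements_subset: "disagreements b s \<subseteq> {1..b}"
  unfolding disagreements_def by blast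

lemma unswapped_subset: "unswapped b s \<subseteq> disagreements b s"
  unfolding unswapped_def by blast

lemma finite_disagreements [simp]: "finite (disagreements b s)"
  using disagreements_subset by (rule finite_subset) simp

lemma card_disagreements_le: "card (disagreements b s) \<le> b"
  using card_mono[OF _ disagreements_subset] by simp

lemma card_unswapped_le_disagreements: "card (unswapped b s) \<le> card (disagreements b s)"
  by (rule card_mono[OF finite_disagreements unswapped_subset])

lemma disagreements_recolour_root: "disagreements b (recolour s 0 cd) = disagreements b s"
  unfolding disagreements_def recolour_def by auto

lemma max_coupling_leaf_disagreement_pair:
  assumes "max_coupling b k K" "2 \<le> k" "proper_pair b k s" "1 \<le> i" "i \<le> b"
    and "(c, d) \<in> set_pmf (K t (fst s) (snd s) i)"
  shows "c = d \<or> c = snd s 0 \<and> d = fst s 0"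
  using assms max_coupling_leaf_disagreement[where K=K and t=t]
  unfolding proper_pair_def by blast

lemma unswapped_recolour_leaf:
  assumes "max_coupling b k K" "2 \<le> k" "proper_pair b k s" "1 \<le> i" "i \<le> b"
    and "cd \<in> set_pmf (K t (fst s) (snd s) i)"
  shows "unswapped b (recolour s i cd) \<subseteq> unswapped b s - {i}"
proof -
  obtain c d where cd: "cd = (c, d)" by fastforce
  show ?thesis
    using max_coupling_leaf_disagreement_pair[OF assms(1-5) assms(6)[unfolded cd]] assms(4)
    unfolding unswapped_def disagreements_def recolour_def cd by auto
qed

lemma card_disagreements_recolour_leaf:
  assumes "max_coupling b k K" "2 \<le> k" "proper_pair b k s" "1 \<le> i" "i \<le> b"
    and "cd \<in> set_pmf (K t (fst s) (snd s) i)"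
  shows "real (card (disagreements b (recolour s i cd)))
    \<le> real (card (disagreements b s - {i})) + indicator {cd. fst cd = snd s 0} cd"
proof -
  obtain c d where cd: "cd = (c, d)" by fastforce
  have sub: "disagreements b (recolour s i cd) \<subseteq>
      (if c = snd s 0 then insert i (disagreements b s - {i}) else disagreements b s - {i})"
    using max_coupling_leaf_disagreement_pair[OF assms(1-5) assms(6)[unfolded cd]] assms(4)
    unfolding disagreements_def recolour_def cd by auto
  show ?thesis
  proof (cases "c = snd s 0")
    case True
    then have "card (disagreements b (recolour s i cd)) \<le> card (insert i (disagreements b s - {i}))"
      using sub by (intro card_mono) auto
    also have "\<dots> = Suc (card (disagreements b s - {i}))"
      by (rule card_insert_disjoint) auto
    finally show ?thesis using True cd by simp
  next
    case False
    then have "card (disagreements b (recolour s i cd)) \<le> card (disagreements b s - {i})"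
      using sub by (intro card_mono) auto
    then show ?thesis using False cd by simp
  qed
qed

text \<open>The bound is a union bound: (b/(b+1))^m is the probability that the root is never
  chosen, ((b-1)/(b+1))^m that neither the root nor a given leaf is, and a recoloured leaf
  never becomes unswapped.\<close>
lemma prob_no_unswapped_ge:
  assumes "max_coupling b k K" "2 \<le> k" "1 \<le> b" "proper_pair b k s"
  shows "measure_pmf.prob (coupled_dist b K (fst s) (snd s) m) {s. unswapped b s = {}}
     \<ge> (real b / (real b + 1)) ^ m - real (card (unswapped b s)) * ((real b - 1) / (real b + 1)) ^ m"
  using assms
proof (induction m arbitrary: K s)
  case 0
  show ?case
  proof (cases "unswapped b s = {}")
    case False
    then have "1 \<le> card (unswapped b s)"
      using finite_subset[OF unswapped_subset finite_disagreements] by (simp add: Suc_le_eq card_gt_0_iff)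
    then show ?thesis using False by (simp add: indicator_def)
  qed simp
next
  case (Suc m)
  let ?q = "real b / (real b + 1)" and ?r = "(real b - 1) / (real b + 1)"
  let ?U = "unswapped b s" and ?K = "\<lambda>v. K 0 (fst s) (snd s) v"
  define P where
    "P s' = measure_pmf.prob (coupled_dist b (\<lambda>t. K (t + 1)) (fst s') (snd s') m) {s. unswapped b s = {}}"
    for s'
  define G where "G v = (if v = 0 then 0 else ?q ^ m - real (card (?U - {v})) * ?r ^ m)" for v
  have r_nonneg: "0 \<le> ?r ^ m" using Suc.prems(3) by simp
  have P_ge: "G v \<le> (\<integral>cd. P (recolour s v cd) \<partial>measure_pmf (?K v))" if "v \<le> b" for v
  proof (cases "v = 0")
    case False
    show ?thesis
    proof (rule integral_ge_const_pmf[where B=1])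
      fix cd assume cd: "cd \<in> set_pmf (?K v)"
      have "card (unswapped b (recolour s v cd)) \<le> card (?U - {v})"
        using unswapped_recolour_leaf[OF Suc.prems(1,2,4) _ that cd] False
        by (intro card_mono) (auto intro: finite_subset[OF unswapped_subset])
      then have "real (card (unswapped b (recolour s v cd))) * ?r ^ m \<le> real (card (?U - {v})) * ?r ^ m"
        using r_nonneg by (intro mult_right_mono) auto
      moreover have "?q ^ m - real (card (unswapped b (recolour s v cd))) * ?r ^ m \<le> P (recolour s v cd)"
        using Suc.IH[OF max_coupling_shift[OF Suc.prems(1), of 1] Suc.prems(2,3)
            proper_pair_recolour[OF Suc.prems(1,2,4) that cd]]
        unfolding P_def by simp
      ultimately show "G v \<le> P (recolour s v cd)"
        using False unfolding G_def by simp
    qed (simp add: P_def)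
  qed (simp add: G_def P_def)
  have "(\<Sum>v\<le>b. G v) = (\<Sum>v\<in>{1..b}. ?q ^ m - real (card (?U - {v})) * ?r ^ m)"
    by (simp add: G_def atMost_atLeast0 sum.atLeast_Suc_atMost)
  also have "\<dots> = real b * ?q ^ m - (\<Sum>v\<in>{1..b}. real (card (?U - {v}))) * ?r ^ m"
    by (simp add: sum_subtractf sum_distrib_right)
  also have "\<dots> = real b * ?q ^ m - (real b - 1) * real (card ?U) * ?r ^ m"
    using sum_card_Diff_singleton[of "{1..b}" ?U] unswapped_subset[of b s] disagreements_subset[of b s]
    by simp
  finally have sum_G_eq: "(\<Sum>v\<le>b. G v) = real b * ?q ^ m - (real b - 1) * real (card ?U) * ?r ^ m" .
  have sum_G: "(\<Sum>v\<le>b. G v) / (real b + 1) = ?q ^ Suc m - real (card ?U) * ?r ^ Suc m"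
    unfolding sum_G_eq by (subst diff_divide_distrib) (simp add: mult_ac)
  have "(\<Sum>v\<le>b. G v) / (real b + 1)
      \<le> (\<Sum>v\<le>b. \<integral>cd. P (recolour s v cd) \<partial>measure_pmf (?K v)) / (real b + 1)"
    using P_ge by (intro divide_right_mono sum_mono) auto
  also have "\<dots> = (\<integral>s'. P s' \<partial>measure_pmf (coupled_step b K 0 s))"
    by (rule integral_coupled_step[symmetric, where B=1]) (simp add: P_def)
  also have "\<dots> = measure_pmf.prob (coupled_dist b K (fst s) (snd s) (Suc m)) {s. unswapped b s = {}}"
    unfolding coupled_dist_Suc' measure_pmf_prob_bind P_def by simp
  finally show ?case unfolding sum_G .
qed

text \<open>A leaf update removes its disagreement unless the first chain picks the second
  root's colour, which has probability at most 1/(k-1).\<close>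
lemma expected_disagreements_coupled_step:
  assumes "max_coupling b k K" "2 \<le> k" "proper_pair b k s"
  shows "(\<integral>s'. real (card (disagreements b s')) \<partial>measure_pmf (coupled_step b K t s))
    \<le> real b / (real b + 1) * real (card (disagreements b s)) + real b / ((real b + 1) * real (k - 1))"
proof -
  let ?D = "disagreements b s" and ?K = "\<lambda>v. K t (fst s) (snd s) v"
  define G where "G v = (if v = 0 then real (card ?D) else real (card (?D - {v})) + 1 / real (k - 1))" for v
  have bounded: "\<bar>real (card (disagreements b s'))\<bar> \<le> real b" for s'
    using card_disagreements_le by simp
  have E_le: "(\<integral>cd. real (card (disagreements b (recolour s v cd))) \<partial>measure_pmf (?K v)) \<le> G v"
    if "v \<le> b" for v
  proof (cases "v = 0")
    case False
    let ?root = "{cd. fst cd = snd s 0}"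
    have "card (?D - {v}) \<le> b" using order.trans[OF card_Diff1_le card_disagreements_le] .
    have "(\<integral>cd. real (card (disagreements b (recolour s v cd))) \<partial>measure_pmf (?K v))
        \<le> (\<integral>cd. real (card (?D - {v})) + indicator ?root cd \<partial>measure_pmf (?K v))"
      using card_disagreements_recolour_leaf[OF assms _ that] False bounded \<open>card (?D - {v}) \<le> b\<close>
      by (intro integral_mono_pmf_bounded[where B="real b" and C="real b + 1"])
         (auto simp: indicator_def)
    also have "\<dots> = real (card (?D - {v})) + measure_pmf.prob (?K v) ?root"
      by (simp add: measure_pmf.integrable_const_bound[where B=1])
    also have "\<dots> \<le> G v"
      using max_coupling_leaf_prob_fst[OF assms(1) _ _ _ that assms(2)] assms(3) False
      unfolding G_def proper_pair_def by simp
    finally show ?thesis .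
  qed (simp add: G_def disagreements_recolour_root)
  have "(\<Sum>v\<le>b. G v) = real (card ?D) + (\<Sum>v\<in>{1..b}. real (card (?D - {v})) + 1 / real (k - 1))"
    by (simp add: G_def atMost_atLeast0 sum.atLeast_Suc_atMost)
  also have "\<dots> = real b * real (card ?D) + real b / real (k - 1)"
    using sum_card_Diff_singleton[of "{1..b}" ?D] disagreements_subset
    by (simp add: sum.distrib algebra_simps)
  finally have sum_G_eq: "(\<Sum>v\<le>b. G v) = real b * real (card ?D) + real b / real (k - 1)" .
  then have sum_G: "(\<Sum>v\<le>b. G v) / (real b + 1)
      = real b / (real b + 1) * real (card ?D) + real b / ((real b + 1) * real (k - 1))"
    by (simp add: add_divide_distrib divide_divide_eq_left mult.commute add.commute)
  have "(\<integral>s'. real (card (disagreements b s')) \<partial>measure_pmf (coupled_step b K t s))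
      = (\<Sum>v\<le>b. \<integral>cd. real (card (disagreements b (recolour s v cd))) \<partial>measure_pmf (?K v)) / (real b + 1)"
    by (rule integral_coupled_step[OF bounded])
  also have "\<dots> \<le> (\<Sum>v\<le>b. G v) / (real b + 1)"
    using E_le by (intro divide_right_mono sum_mono) auto
  finally show ?thesis unfolding sum_G .
qed

lemma expected_disagreements_coupled_dist:
  assumes "max_coupling b k K" "2 \<le> k" "proper_pair b k (x0, y0)"
  shows "(\<integral>s. real (card (disagreements b s)) \<partial>measure_pmf (coupled_dist b K x0 y0 n))
    \<le> (real b / (real b + 1)) ^ n * real b + real b / real (k - 1)"
proof -
  let ?q = "real b / (real b + 1)" and ?F = "real b / real (k - 1)"
  define a where "a n = (\<integral>s. real (card (disagreements b s)) \<partial>measure_pmf (coupled_dist b K x0 y0 n))" for n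
  have bounded: "\<bar>real (card (disagreements b s))\<bar> \<le> real b" for s
    using card_disagreements_le by simp
  have integrable: "integrable (measure_pmf p) (\<lambda>s. real (card (disagreements b s)))" for p
    using bounded by (intro measure_pmf.integrable_const_bound[where B="real b"]) auto
  have step: "a (Suc n) \<le> ?q * a n + (1 - ?q) * ?F" for n
  proof -
    let ?E = "\<lambda>s. \<integral>s'. real (card (disagreements b s')) \<partial>measure_pmf (coupled_step b K n s)"
    let ?c = "real b / ((real b + 1) * real (k - 1))"
    have "a (Suc n) = (\<integral>s. ?E s \<partial>measure_pmf (coupled_dist b K x0 y0 n))"
      unfolding a_def coupled_dist.simps by (rule integral_bind_pmf_bounded[OF bounded])
    also have "\<dots> \<le> (\<integral>s. ?q * real (card (disagreements b s)) + ?c \<partial>measure_pmf (coupled_dist b K x0 y0 n))"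
    proof (rule integral_mono_pmf_bounded[where B="real b" and C="real b + ?c"])
      show "?E s \<le> ?q * real (card (disagreements b s)) + ?c"
        if "s \<in> set_pmf (coupled_dist b K x0 y0 n)" for s
        using expected_disagreements_coupled_step[OF assms(1,2) proper_pair_coupled_dist[OF assms that]] .
      show "\<bar>?E s\<bar> \<le> real b" for s
        using measure_pmf.integral_le_const[of _ "\<lambda>s. real (card (disagreements b s))" "real b"]
          card_disagreements_le
        by (simp add: measure_pmf.integrable_const_bound[where B="real b"] AE_pmfI)
      show "\<bar>?q * real (card (disagreements b s)) + ?c\<bar> \<le> real b + ?c" for s
        using mult_mono[of ?q 1 "real (card (disagreements b s))" "real b"] card_disagreements_le
        by simp
    qed
    also have "\<dots> = ?q * a n + ?c"
      unfolding a_def using integrable by simp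
    also have "?c = (1 - ?q) * ?F"
      by (simp add: field_simps)
    finally show ?thesis .
  qed
  have "a n \<le> ?q ^ n * (a 0 - ?F) + ?F"
    by (rule affine_recurrence_bound[where a=a, OF step]) simp
  also have "\<dots> \<le> ?q ^ n * real b + ?F"
  proof -
    have "a 0 \<le> real b" "0 \<le> ?F"
      using card_disagreements_le[of b "(x0, y0)"] unfolding a_def by simp_all
    then have "a 0 - ?F \<le> real b" by (simp add: diff_le_eq add_increasing2)
    then show ?thesis by (intro add_right_mono mult_left_mono) auto
  qed
  finally show ?thesis unfolding a_def .
qed

lemma prob_no_unswapped_two_phase:
  assumes "max_coupling b k K" "2 \<le> k" "1 \<le> b" "proper_pair b k (x0, y0)"
  shows "measure_pmf.prob (coupled_dist b K x0 y0 (n + m)) {s. unswapped b s = {}}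
    \<ge> (real b / (real b + 1)) ^ m
       - ((real b - 1) / (real b + 1)) ^ m * ((real b / (real b + 1)) ^ n * real b + real b / real (k - 1))"
proof -
  let ?q = "real b / (real b + 1)" and ?r = "(real b - 1) / (real b + 1)"
  let ?D = "coupled_dist b K x0 y0 n"
  define P where
    "P s = measure_pmf.prob (coupled_dist b (\<lambda>t. K (t + n)) (fst s) (snd s) m) {s. unswapped b s = {}}"
    for s
  have r_bounds: "0 \<le> ?r ^ m" "?r ^ m \<le> 1" using assms(3) by (simp_all add: power_le_one)
  have "?q ^ m - ?r ^ m * (?q ^ n * real b + real b / real (k - 1))
      \<le> ?q ^ m - ?r ^ m * (\<integral>s. real (card (disagreements b s)) \<partial>measure_pmf ?D)"
    using expected_disagreements_coupled_dist[OF assms(1,2,4)] r_bounds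
    by (intro diff_left_mono mult_left_mono) auto
  also have "\<dots> = (\<integral>s. ?q ^ m - real (card (disagreements b s)) * ?r ^ m \<partial>measure_pmf ?D)"
    by (simp add: measure_pmf.integrable_const_bound[where B="real b"] card_disagreements_le mult.commute)
  also have "\<dots> \<le> (\<integral>s. P s \<partial>measure_pmf ?D)"
  proof (rule integral_mono_pmf_bounded[where B="1 + real b" and C=1])
    fix s assume "s \<in> set_pmf ?D"
    then have "?q ^ m - real (card (unswapped b s)) * ?r ^ m \<le> P s"
      using prob_no_unswapped_ge[OF max_coupling_shift[OF assms(1)] assms(2,3)]
        proper_pair_coupled_dist[OF assms(1,2,4)]
      unfolding P_def by simp
    then show "?q ^ m - real (card (disagreements b s)) * ?r ^ m \<le> P s"
      using mult_right_mono[OF of_nat_mono[OF card_unswapped_le_disagreements[of b s]] r_bounds(1)]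
      by linarith
  next
    fix s
    have "real (card (disagreements b s)) * ?r ^ m \<le> real b * 1"
      using card_disagreements_le r_bounds by (intro mult_mono) auto
    moreover have "0 \<le> real (card (disagreements b s)) * ?r ^ m" "0 \<le> ?q ^ m" "?q ^ m \<le> 1"
      using r_bounds by (simp_all add: power_le_one)
    ultimately show "\<bar>?q ^ m - real (card (disagreements b s)) * ?r ^ m\<bar> \<le> 1 + real b"
      unfolding abs_le_iff by linarith
  qed (simp add: P_def)
  also have "\<dots> = measure_pmf.prob (coupled_dist b K x0 y0 (n + m)) {s. unswapped b s = {}}"
    unfolding coupled_dist_add measure_pmf_prob_bind P_def ..
  finally show ?thesis .
qed

lemma one_minus_power_le_exp:
  fixes x :: real
  assumes "x \<le> 1"
  shows "(1 - x) ^ n \<le> exp (- real n * x)"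
proof -
  have "(1 - x) ^ n \<le> exp (- x) ^ n"
    using assms exp_ge_add_one_self[of "- x"] by (intro power_mono) auto
  then show ?thesis by (simp add: exp_of_nat_mult[symmetric])
qed

lemma exp_le_ratio_power:
  fixes B :: real
  assumes "B > 0"
  shows "exp (- real n / B) \<le> (B / (B + 1)) ^ n"
proof -
  have "1 + 1 / B \<le> exp (1 / B)" by (rule exp_ge_add_one_self)
  then have "1 / exp (1 / B) \<le> 1 / (1 + 1 / B)"
    using assms by (intro divide_left_mono) (auto intro!: mult_pos_pos add_pos_pos)
  moreover have "1 / (1 + 1 / B) = B / (B + 1)" using assms by (simp add: field_simps)
  ultimately have "exp (- 1 / B) \<le> B / (B + 1)" by (simp add: exp_minus')
  then have "exp (- 1 / B) ^ n \<le> (B / (B + 1)) ^ n" by (intro power_mono) auto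
  then show ?thesis by (simp add: exp_of_nat_mult[symmetric])
qed

lemma ln_bounds_large:
  fixes B :: real
  assumes "B \<ge> 3 ^ 20"
  shows "20 \<le> ln B" "4 * ln B \<le> B"
proof -
  have "exp 20 \<le> (3::real) ^ 20"
    using exp_of_nat_mult[of 20 "1 :: real"] power_mono[OF exp_le, of 20] by simp
  then show "20 \<le> ln B" using assms by (subst ln_ge_iff) auto
  have "ln B = 2 * ln (sqrt B)" using assms by (simp add: ln_sqrt)
  also have "\<dots> \<le> 2 * sqrt B" using assms ln_le_minus_one[of "sqrt B"] by simp
  also have "8 * sqrt B \<le> sqrt B * sqrt B"
    using assms real_sqrt_le_mono[of 64 B] by (intro mult_right_mono) auto
  then have "2 * sqrt B \<le> B / 4" using assms by simp
  finally show "4 * ln B \<le> B" by simp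
qed

lemma exp_near_inverse_square:
  fixes B L :: real
  assumes "B \<ge> 100" "L > 0" "\<bar>M - 2 * B * ln L\<bar> \<le> 1"
  shows "99 / 100 / L\<^sup>2 \<le> exp (- M / B)" "exp (- M / B) \<le> 3 / L\<^sup>2"
proof -
  define \<delta> where "\<delta> = 2 * ln L - M / B"
  have "\<bar>\<delta>\<bar> \<le> 1 / B"
    using assms(1,3) unfolding \<delta>_def by (simp add: field_simps abs_le_iff)
  moreover have "1 / B \<le> 1 / 100" using assms(1) by (intro divide_left_mono) auto
  ultimately have \<delta>: "\<bar>\<delta>\<bar> \<le> 1 / 100" by linarith
  have exp_split: "exp (- M / B) = exp \<delta> / L\<^sup>2"
    using assms(2) exp_of_nat_mult[of 2 "ln L"]
    unfolding \<delta>_def by (simp add: exp_diff exp_minus')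
  have "99 / 100 \<le> exp \<delta>" using \<delta> exp_ge_add_one_self[of \<delta>] by linarith
  then show "99 / 100 / L\<^sup>2 \<le> exp (- M / B)"
    unfolding exp_split by (intro divide_right_mono) auto
  have "exp \<delta> \<le> exp 1" using \<delta> by simp
  then have "exp \<delta> \<le> 3" using exp_le by linarith
  then show "exp (- M / B) \<le> 3 / L\<^sup>2"
    unfolding exp_split by (intro divide_right_mono) auto
qed

lemma two_phase_bound_ge:
  fixes B \<kappa> :: real and N M :: nat
  assumes B: "B \<ge> 3 ^ 20" and \<kappa>: "\<kappa> \<ge> B / (2 * ln B)"
    and N: "real N \<ge> (B + 1) * ln B" and M: "\<bar>real M - 2 * B * ln (ln B)\<bar> \<le> 1"
  shows "1 / (2 * (ln B)\<^sup>2)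
    \<le> (B / (B + 1)) ^ M - ((B - 1) / (B + 1)) ^ M * ((B / (B + 1)) ^ N * B + B / \<kappa>)"
proof -
  define L where "L = ln B"
  let ?q = "B / (B + 1)" and ?\<rho> = "(B - 1) / B"
  define \<beta> where "\<beta> = ?q ^ N * B + B / \<kappa>"
  have L: "20 \<le> L" "4 * L \<le> B" using ln_bounds_large[OF B] unfolding L_def by auto
  have B_pos: "B > 0" using B by simp
  have "?q ^ N \<le> exp (- real N * (1 / (B + 1)))"
    using one_minus_power_le_exp[of "1 / (B + 1)" N] B_pos by (simp add: field_simps)
  also have "\<dots> \<le> exp (- L)"
    using N B_pos unfolding L_def by (simp add: field_simps)
  also have "\<dots> = 1 / B" unfolding L_def using B_pos by (simp add: exp_minus')
  finally have qN: "?q ^ N * B \<le> 1" using B_pos by (simp add: field_simps)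
  have \<kappa>_min_pos: "0 < B / (2 * L)" using B_pos L by simp
  moreover have \<kappa>_pos: "0 < \<kappa>" using \<kappa>_min_pos \<kappa> unfolding L_def by linarith
  ultimately have "0 < \<kappa> * (B / (2 * L))" by (simp only: mult_pos_pos)
  then have "B / \<kappa> \<le> B / (B / (2 * L))"
    using \<kappa> B_pos unfolding L_def by (intro divide_left_mono) auto
  then have "B / \<kappa> \<le> 2 * L" using B_pos L by simp
  then have \<beta>_bounds: "0 \<le> \<beta>" "\<beta> \<le> 1 + 2 * L"
    using qN \<kappa>_pos B_pos by (auto simp: \<beta>_def)
  have "?\<rho> ^ M \<le> exp (- real M * (1 / B))"
    using one_minus_power_le_exp[of "1 / B" M] B_pos L by (simp add: diff_divide_distrib)
  also have "\<dots> \<le> 3 / L\<^sup>2"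
    using exp_near_inverse_square(2)[of B L "real M"] B L M unfolding L_def by simp
  finally have \<rho>M: "?\<rho> ^ M \<le> 3 / L\<^sup>2" .
  have qM: "99 / 100 / L\<^sup>2 \<le> ?q ^ M"
    using exp_near_inverse_square(1)[of B L "real M"] exp_le_ratio_power[OF B_pos, of M] B L M
    unfolding L_def by simp
  have "(B - 1) / (B + 1) = ?q * ?\<rho>" using B_pos by (simp add: divide_simps)
  then have r_split: "((B - 1) / (B + 1)) ^ M = ?q ^ M * ?\<rho> ^ M" by (simp only: power_mult_distrib)
  have "?\<rho> ^ M * \<beta> \<le> 3 / L\<^sup>2 * (1 + 2 * L)"
    using \<rho>M \<beta>_bounds B_pos by (intro mult_mono) auto
  also have "\<dots> = 3 / L\<^sup>2 + 6 / L" using L by (simp add: field_simps power2_eq_square)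
  also have "\<dots> \<le> 3 / 20\<^sup>2 + 6 / 20"
    using L by (intro add_mono divide_left_mono power_mono) auto
  finally have "?\<rho> ^ M * \<beta> \<le> 2 / 5" by simp
  have "1 / (2 * (ln B)\<^sup>2) \<le> 99 / 100 / L\<^sup>2 * (3 / 5)"
    using L unfolding L_def by (simp add: divide_simps)
  also have "\<dots> \<le> ?q ^ M * (1 - ?\<rho> ^ M * \<beta>)"
    using qM \<open>?\<rho> ^ M * \<beta> \<le> 2 / 5\<close> B_pos by (intro mult_mono) auto
  also have "\<dots> = ?q ^ M - ((B - 1) / (B + 1)) ^ M * ((B / (B + 1)) ^ N * B + B / \<kappa>)"
    unfolding r_split \<beta>_def by (simp add: algebra_simps)
  finally show ?thesis .
qed

lemma num_colors_bounds:
  assumes "3 ^ 20 \<le> real b"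
  shows "2 \<le> num_colors b" "real b / (2 * ln (real b)) \<le> real (num_colors b - 1)"
proof -
  let ?L = "ln (real b)"
  have L: "20 \<le> ?L" "4 * ?L \<le> real b" using ln_bounds_large[OF assms] by auto
  then have ratio: "4 \<le> real b / ?L" by (simp add: field_simps)
  then have "real b / ?L - 1 < real (num_colors b)"
    unfolding num_colors_def by linarith
  then show k: "2 \<le> num_colors b" using ratio by linarith
  have "real b / (2 * ?L) \<le> real b / ?L - 2" using ratio by (simp add: field_simps)
  also have "\<dots> \<le> real (num_colors b - 1)"
    using \<open>real b / ?L - 1 < real (num_colors b)\<close> k by (simp add: of_nat_diff)
  finally show "real b / (2 * ?L) \<le> real (num_colors b - 1)" .
qed

lemma T_w_split:
  assumes "3 ^ 20 \<le> real b"
  obtains n m where "T_w b = n + m" "(real b + 1) * ln (real b) \<le> real n"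
    "\<bar>real m - 2 * real b * ln (ln (real b))\<bar> \<le> 1"
proof -
  let ?L = "ln (real b)"
  define n where "n = nat \<lceil>4 * (real b + 1) * ?L\<rceil>"
  have L: "20 \<le> ?L" using ln_bounds_large[OF assms] by auto
  then have lnL: "0 \<le> ln ?L" by simp
  have "real n = \<lceil>4 * (real b + 1) * ?L\<rceil>"
    using L unfolding n_def by simp
  then have n: "4 * (real b + 1) * ?L \<le> real n" "real n < 4 * (real b + 1) * ?L + 1"
    using ceiling_correct[of "4 * (real b + 1) * ?L"] by linarith+
  have "real (T_w b) = \<lceil>4 * (real b + 1) * ?L + 2 * real b * ln ?L\<rceil>"
    using L lnL unfolding T_w_def by simp
  then have T: "4 * (real b + 1) * ?L + 2 * real b * ln ?L \<le> real (T_w b)"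
    "real (T_w b) < 4 * (real b + 1) * ?L + 2 * real b * ln ?L + 1"
    using ceiling_correct[of "4 * (real b + 1) * ?L + 2 * real b * ln ?L"] by linarith+
  have "n \<le> T_w b"
    using L lnL unfolding n_def T_w_def by (intro nat_mono ceiling_mono) simp
  then show ?thesis
    using that[of n "T_w b - n"] n T L by (simp add: of_nat_diff abs_le_iff)
qed

theorem lemma3:
  "\<exists>B. \<forall>b \<ge> B. \<forall>x0 y0 K.
     proper_col b (num_colors b) x0 \<and> proper_col b (num_colors b) y0 \<and>
     max_coupling b (num_colors b) K \<longrightarrow>
     measure_pmf.prob (coupled_dist b K x0 y0 (T_w b))
       {(X, Y). \<forall>i \<in> {1..b}. X i \<noteq> Y i \<longrightarrow> X i = Y 0 \<and> Y i = X 0}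
     \<ge> 1 / (2 * (ln (real b))\<^sup>2)"
proof (intro exI[of _ "3 ^ 20"] allI impI)
  fix b :: nat and x0 y0 K
  assume "3 ^ 20 \<le> b"
    and H: "proper_col b (num_colors b) x0 \<and> proper_col b (num_colors b) y0 \<and>
      max_coupling b (num_colors b) K"
  then have B: "3 ^ 20 \<le> real b" by (metis of_nat_le_iff of_nat_numeral of_nat_power)
  obtain n m where T: "T_w b = n + m" "(real b + 1) * ln (real b) \<le> real n"
    "\<bar>real m - 2 * real b * ln (ln (real b))\<bar> \<le> 1"
    using T_w_split[OF B] .
  have event: "{(X, Y). \<forall>i \<in> {1..b}. X i \<noteq> Y i \<longrightarrow> X i = Y 0 \<and> Y i = X 0}
      = {s. unswapped b s = {}}"
    unfolding unswapped_def disagreements_def by auto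
  have "1 / (2 * (ln (real b))\<^sup>2)
      \<le> (real b / (real b + 1)) ^ m - ((real b - 1) / (real b + 1)) ^ m
         * ((real b / (real b + 1)) ^ n * real b + real b / real (num_colors b - 1))"
    by (rule two_phase_bound_ge[OF B num_colors_bounds(2)[OF B] T(2,3)])
  also have "\<dots> \<le> measure_pmf.prob (coupled_dist b K x0 y0 (n + m)) {s. unswapped b s = {}}"
    using H num_colors_bounds(1)[OF B] B
    by (intro prob_no_unswapped_two_phase) (auto simp: proper_pair_def)
  finally show "1 / (2 * (ln (real b))\<^sup>2) \<le> measure_pmf.prob (coupled_dist b K x0 y0 (T_w b))
       {(X, Y). \<forall>i \<in> {1..b}. X i \<noteq> Y i \<longrightarrow> X i = Y 0 \<and> Y i = X 0}"
    unfolding event T(1) .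
qed

end
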